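(* Let $\mathcal{B}(\mathbb{R}^d)$ be the Boolean logic of Borel subsets of $\mathbb{R}^d$ (order $\subset$, orthocomplement $A\mapsto A^c=\mathbb{R}^d\setminus A$, join $\cup$, meet $\cap$), and let $\mathcal{C}(\mathbb{R}^{d+1})$ be the logic of causally complete subsets of Minkowski space described in the context. The causal completion map $$\mathrm{c}:\mathcal{B}(\mathbb{R}^d)\to\mathcal{C}(\mathbb{R}^{d+1}),\qquad \mathrm{c}(A):=(\{0\}\times A)''$$ is an injective $\sigma$-additive logic homomorphism (so that $\mathrm{c}(\mathcal{B}(\mathbb{R}^d))$ is a Boolean sublogic of $\mathcal{C}(\mathbb{R}^{d+1})$), and it is covariant with respect to the actions of the Euclidean group $\mathbf{E}(d)$ on $\mathcal{B}(\mathbb{R}^d)$ (by $A\mapsto g(A)$) and on $\mathcal{C}(\mathbb{R}^{d+1})$ (by $\mathcal{O}\mapsto \{(x_0,g\mathbf{x}):(x_0,\mathbf{x})\in\mathcal{O}\}$), i.e. $\mathrm{c}(g(A))=g\,\mathrm{c}(A)$.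
   Context: Minkowski space $\mathbb{R}^{d+1}$ has points $x=(x_0,\mathbf{x})\in\mathbb{R}\times\mathbb{R}^d$ and Lorentz product $x\cdot y=x_0y_0-\mathbf{x}\cdot\mathbf{y}$, $x^2=x\cdot x$. Write $x\sim y$ iff $x\neq y$ and $(x-y)^2\le 0$ (non-timelike separation). For $\mathcal{O}\subset\mathbb{R}^{d+1}$ its causal complement is $\mathcal{O}'=\{x: x\sim y\ \forall y\in\mathcal{O}\}$; $\mathcal{O}$ is causally complete if $\mathcal{O}=\mathcal{O}''$. $\mathcal{C}(\mathbb{R}^{d+1})$ is the set of causally complete subsets; with order $\subset$, orthocomplementation $\mathcal{O}\mapsto\mathcal{O}'$, $0=\emptyset$, $1=\mathbb{R}^{d+1}$, join $\mathcal{O}_1\vee\mathcal{O}_2=(\mathcal{O}_1\cup\mathcal{O}_2)''$ (and arbitrary joins $(\bigcup\mathcal{O}_i)''$), meet $\cap$, it is a complete orthomodular orthocomplemented lattice (a logic). A logic is a $\sigma$-complete orthocomplemented orthomodular bounded lattice. A logic homomorphism preserves $0,1$, the orthocomplement, binary joins and meets. A map $\varphi$ between such lattices is $\sigma$-additive if $\varphi(\bigvee_{A\in\mathcal{L}_0}A)=\bigvee_{A\in\mathcal{L}_0}\varphi(A)$ for every countable subset $\mathcal{L}_0$ whose distinct elements are pairwise separated ($A\le B^\perp$). *)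

theory Defs
  imports "HOL-Analysis.Analysis"
begin

text \<open>Minkowski space R^{d+1} is modelled as real \<times> (real ^ 'n), with d = CARD('n).
  Lorentz square of a point (x0, x): x0^2 - |x|^2.\<close>

definition lorentz_sq :: "real \<times> (real ^ 'n) \<Rightarrow> real" where
  "lorentz_sq x = (fst x)\<^sup>2 - (norm (snd x))\<^sup>2"

definition causally_sep :: "real \<times> (real ^ 'n) \<Rightarrow> real \<times> (real ^ 'n) \<Rightarrow> bool" where
  "causally_sep x y \<longleftrightarrow> x \<noteq> y \<and> lorentz_sq (x - y) \<le> 0"

definition ccompl :: "(real \<times> (real ^ 'n)) set \<Rightarrow> (real \<times> (real ^ 'n)) set" where
  "ccompl S = {x. \<forall>y\<in>S. causally_sep x y}"

definition causally_complete :: "(real \<times> (real ^ 'n)) set \<Rightarrow> bool" where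
  "causally_complete S \<longleftrightarrow> ccompl (ccompl S) = S"

definition cjoin :: "(real \<times> (real ^ 'n)) set set \<Rightarrow> (real \<times> (real ^ 'n)) set" where
  "cjoin F = ccompl (ccompl (\<Union>F))"

definition cmap :: "(real ^ 'n) set \<Rightarrow> (real \<times> (real ^ 'n)) set" where
  "cmap A = ccompl (ccompl ({0} \<times> A))"

definition euclidean_motion :: "(real ^ 'n \<Rightarrow> real ^ 'n) \<Rightarrow> bool" where
  "euclidean_motion g \<longleftrightarrow> (\<exists>f b. orthogonal_transformation f \<and> g = (\<lambda>x. f x + b))"

definition mink_act :: "(real ^ 'n \<Rightarrow> real ^ 'n) \<Rightarrow> (real \<times> (real ^ 'n)) set \<Rightarrow> (real \<times> (real ^ 'n)) set" where
  "mink_act g S = (\<lambda>(t, x). (t, g x)) ` S"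

end

theory Submission
  imports Defs
begin

text \<open>The causal complement of a time-zero slice \<open>{0} \<times> A\<close> is the domain of dependence of
  \<open>- A\<close>: the points \<open>(t, y)\<close> with \<open>y \<notin> A\<close> and \<open>\<bar>t\<bar>\<close> at most the distance from \<open>y\<close> to \<open>A\<close>.
  The causal complement of the domain of dependence of \<open>B\<close> is again the domain of dependence
  of \<open>- B\<close>: the nontrivial inclusion holds because a straight segment from a point outside
  \<open>B\<close> to a point of \<open>B\<close> crosses the boundary of \<open>B\<close>, so the distance from its start to \<open>B\<close> plus
  the distance from its end to \<open>- B\<close> is at most its length. Hence \<open>c(A)\<close> is the domain of
  dependence of \<open>A\<close>, which turns complements into causal complements and intersections into
  intersections; by de Morgan \<open>c\<close> then preserves arbitrary joins. Covariance holds because a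
  Euclidean motion acts on Minkowski space as a bijection preserving causal separation.\<close>

definition dependence_domain :: "(real ^ 'n) set \<Rightarrow> (real \<times> (real ^ 'n)) set" where
  "dependence_domain A = {(t, y). y \<in> A \<and> (\<forall>z. z \<notin> A \<longrightarrow> \<bar>t\<bar> \<le> dist y z)}"

lemma causally_sep_iff:
  "causally_sep (t, y) (s, z) \<longleftrightarrow> (t, y) \<noteq> (s, z) \<and> \<bar>t - s\<bar> \<le> dist y z"
proof -
  have "lorentz_sq ((t, y) - (s, z)) \<le> 0 \<longleftrightarrow> (t - s)\<^sup>2 \<le> (dist y z)\<^sup>2"
    by (simp add: lorentz_sq_def dist_norm)
  also have "\<dots> \<longleftrightarrow> \<bar>t - s\<bar> \<le> dist y z"
    by (metis abs_le_square_iff abs_of_nonneg zero_le_dist)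
  finally show ?thesis by (simp add: causally_sep_def)
qed

lemma crossing_pair_near_segment:
  fixes y z :: "'a::real_normed_vector"
  assumes "y \<in> A" "z \<notin> A" "e > 0"
  obtains a b where "a \<in> A" "b \<notin> A" "dist y b + dist a z \<le> dist y z + e"
proof -
  define L where "L = dist y z"
  obtain n :: nat where n: "L / e < real n"
    using reals_Archimedean2 by blast
  then have "n > 0"
    using \<open>e > 0\<close> by (metis L_def divide_nonneg_pos not_gr0 not_less of_nat_0 zero_le_dist)
  define p where "p k = y + (real k / real n) *\<^sub>R (z - y)" for k
  have "p 0 = y" "p n = z"
    using \<open>n > 0\<close> by (simp_all add: p_def)
  then obtain k where k: "k < n" "p k \<in> A" "p (Suc k) \<notin> A"
    using ex_least_nat_less[of "\<lambda>k. p k \<notin> A" n] assms by auto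
  have dist_start: "dist y (p j) = real j / real n * L" for j
    by (simp add: p_def dist_norm L_def norm_minus_commute)
  have dist_end: "dist (p j) z = (1 - real j / real n) * L" if "j \<le> n" for j
  proof -
    have "z - p j = (1 - real j / real n) *\<^sub>R (z - y)"
      by (simp add: p_def algebra_simps)
    moreover have "1 - real j / real n \<ge> 0"
      using that \<open>n > 0\<close> by simp
    ultimately show ?thesis by (simp add: dist_norm L_def norm_minus_commute)
  qed
  have "dist y (p (Suc k)) + dist (p k) z = L + L / real n"
    using dist_start[of "Suc k"] dist_end[of k] k(1) \<open>n > 0\<close> by (simp add: field_simps)
  also have "L / real n \<le> e"
    using n \<open>n > 0\<close> \<open>e > 0\<close> by (simp add: field_simps)
  finally show thesis
    using k that L_def by fastforce
qed

lemma dist_bound_plus_compl_dist_bound_le: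
  fixes y z :: "'a::real_normed_vector"
  assumes "y \<notin> B" "z \<in> B"
    and r: "\<And>w. w \<in> B \<Longrightarrow> r \<le> dist y w"
    and s: "\<And>w. w \<notin> B \<Longrightarrow> s \<le> dist z w"
  shows "r + s \<le> dist y z"
proof (rule field_le_epsilon)
  fix e :: real
  assume "e > 0"
  then obtain a b where "a \<in> - B" "b \<notin> - B" "dist y b + dist a z \<le> dist y z + e"
    using crossing_pair_near_segment[of y "- B" z e] assms(1,2) by auto
  moreover have "r \<le> dist y b" "s \<le> dist a z"
    using r s \<open>a \<in> - B\<close> \<open>b \<notin> - B\<close> by (auto simp: dist_commute)
  ultimately show "r + s \<le> dist y z + e"
    by linarith
qed

lemma ccompl_time_zero_slice: "ccompl ({0} \<times> A) = dependence_domain (- A)"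
  by (auto simp: ccompl_def dependence_domain_def causally_sep_iff)

lemma ccompl_dependence_domain: "ccompl (dependence_domain B) = dependence_domain (- B)"
proof (intro set_eqI iffI)
  fix x
  assume "x \<in> ccompl (dependence_domain B)"
  then have "x \<in> ccompl ({0} \<times> B)"
    by (force simp: ccompl_def dependence_domain_def)
  then show "x \<in> dependence_domain (- B)"
    by (simp add: ccompl_time_zero_slice)
next
  fix x
  assume "x \<in> dependence_domain (- B)"
  then obtain t y where x: "x = (t, y)" and "y \<notin> B"
    and t: "\<And>w. w \<in> B \<Longrightarrow> \<bar>t\<bar> \<le> dist y w"
    by (auto simp: dependence_domain_def)
  show "x \<in> ccompl (dependence_domain B)"
    unfolding ccompl_def
  proof (safe)
    fix s z
    assume "(s, z) \<in> dependence_domain B"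
    then have "z \<in> B" and s: "\<And>w. w \<notin> B \<Longrightarrow> \<bar>s\<bar> \<le> dist z w"
      by (auto simp: dependence_domain_def)
    have "\<bar>t\<bar> + \<bar>s\<bar> \<le> dist y z"
      using dist_bound_plus_compl_dist_bound_le[OF \<open>y \<notin> B\<close> \<open>z \<in> B\<close> t s] .
    then show "causally_sep x (s, z)"
      using \<open>y \<notin> B\<close> \<open>z \<in> B\<close> by (auto simp: x causally_sep_iff)
  qed
qed

lemma cmap_eq_dependence_domain: "cmap A = dependence_domain A"
  by (simp add: cmap_def ccompl_time_zero_slice ccompl_dependence_domain)

lemma dependence_domain_Inter: "dependence_domain (\<Inter> G) = \<Inter> (dependence_domain ` G)"
  by (auto simp: dependence_domain_def)

lemma dependence_domain_time_zero: "dependence_domain A \<inter> {0} \<times> UNIV = {0} \<times> A"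
  by (auto simp: dependence_domain_def)

lemma ccompl_Union: "ccompl (\<Union> G) = \<Inter> (ccompl ` G)"
  by (auto simp: ccompl_def)

lemma causally_complete_cmap: "causally_complete (cmap A)"
  by (simp add: causally_complete_def cmap_eq_dependence_domain ccompl_dependence_domain)

lemma cmap_empty: "cmap {} = {}"
  by (auto simp: cmap_eq_dependence_domain dependence_domain_def)

lemma cmap_UNIV: "cmap UNIV = UNIV"
  by (auto simp: cmap_eq_dependence_domain dependence_domain_def)

lemma cmap_Compl: "cmap (- A) = ccompl (cmap A)"
  by (simp add: cmap_eq_dependence_domain ccompl_dependence_domain)

lemma cmap_Int: "cmap (A \<inter> B) = cmap A \<inter> cmap B"
  using dependence_domain_Inter[of "{A, B}"] by (simp add: cmap_eq_dependence_domain)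

lemma cmap_Union: "cmap (\<Union> F) = cjoin (cmap ` F)"
proof -
  have "ccompl (\<Union> (cmap ` F)) = \<Inter> ((\<lambda>A. dependence_domain (- A)) ` F)"
    by (simp add: ccompl_Union cmap_eq_dependence_domain ccompl_dependence_domain image_image)
  also have "\<dots> = dependence_domain (\<Inter> (uminus ` F))"
    by (simp add: dependence_domain_Inter image_image)
  also have "\<Inter> (uminus ` F) = - \<Union> F"
    by blast
  finally show ?thesis
    by (simp add: cjoin_def ccompl_dependence_domain cmap_eq_dependence_domain)
qed

lemma cmap_Un: "cmap (A \<union> B) = cjoin {cmap A, cmap B}"
  using cmap_Union[of "{A, B}"] by simp

lemma inj_cmap: "inj cmap"
proof (rule injI)
  fix A B :: "(real ^ 'n) set"
  assume "cmap A = cmap B"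
  then have "{0::real} \<times> A = {0} \<times> B"
    by (metis cmap_eq_dependence_domain dependence_domain_time_zero)
  then show "A = B"
    by blast
qed

lemma ccompl_image:
  assumes "bij h" and sep: "\<And>x y. causally_sep (h x) (h y) \<longleftrightarrow> causally_sep x y"
  shows "ccompl (h ` S) = h ` ccompl S"
proof -
  have "h x \<in> ccompl (h ` S) \<longleftrightarrow> h x \<in> h ` ccompl S" for x
    using bij_is_inj[OF \<open>bij h\<close>] by (auto simp: ccompl_def sep inj_image_mem_iff)
  then show ?thesis
    by (metis \<open>bij h\<close> bij_is_surj set_eqI surj_f_inv_f)
qed

lemma euclidean_motion_bij_isometry:
  assumes "euclidean_motion g"
  shows "bij g" "dist (g x) (g y) = dist x y"
proof -
  obtain f b where f: "orthogonal_transformation f" and g: "g = (\<lambda>x. f x + b)"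
    using assms by (auto simp: euclidean_motion_def)
  show "dist (g x) (g y) = dist x y"
    using f by (simp add: g orthogonal_transformation_isometry dist_norm)
  show "bij g"
    using bij_comp[OF orthogonal_transformation_bij[OF f] bij_plus_right[of b]]
    by (simp add: g comp_def)
qed

lemma cmap_euclidean_motion:
  fixes g :: "real ^ 'n \<Rightarrow> real ^ 'n"
  assumes "euclidean_motion g"
  shows "cmap (g ` A) = mink_act g (cmap A)"
proof -
  define h :: "real \<times> (real ^ 'n) \<Rightarrow> real \<times> (real ^ 'n)" where "h = map_prod id g"
  have "bij g" and iso: "\<And>x y. dist (g x) (g y) = dist x y"
    using euclidean_motion_bij_isometry[OF assms] by auto
  have "bij h"
    using bij_betw_map_prod[OF bij_id \<open>bij g\<close>] by (simp add: h_def)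
  have "inj g"
    using \<open>bij g\<close> bij_is_inj by blast
  have "causally_sep (h x) (h y) \<longleftrightarrow> causally_sep x y" for x y
    using \<open>inj g\<close> by (cases x, cases y) (auto simp: h_def causally_sep_iff iso inj_eq)
  then have ccompl_h: "ccompl (h ` S) = h ` ccompl S" for S
    using ccompl_image[OF \<open>bij h\<close>] by blast
  have "h ` ({0} \<times> A) = {0} \<times> g ` A"
    by (simp add: h_def map_prod_surj_on)
  then have "cmap (g ` A) = ccompl (ccompl (h ` ({0} \<times> A)))"
    by (simp add: cmap_def)
  also have "\<dots> = h ` cmap A"
    by (simp add: ccompl_h cmap_def)
  also have "\<dots> = mink_act g (cmap A)"
    by (simp add: mink_act_def h_def map_prod_def)
  finally show ?thesis .
qed

theorem lemma2p7:
  fixes c :: "(real ^ 'n) set \<Rightarrow> (real \<times> (real ^ 'n)) set"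
  assumes c_def: "c = cmap"
  shows
    \<comment> \<open>c maps Borel sets into causally complete sets\<close>
    "(\<forall>A \<in> sets borel. causally_complete (c A))
     \<comment> \<open>logic homomorphism: 0, 1, orthocomplement, binary joins and meets\<close>
     \<and> c {} = {}
     \<and> c UNIV = UNIV
     \<and> (\<forall>A \<in> sets borel. c (- A) = ccompl (c A))
     \<and> (\<forall>A \<in> sets borel. \<forall>B \<in> sets borel. c (A \<union> B) = cjoin {c A, c B})
     \<and> (\<forall>A \<in> sets borel. \<forall>B \<in> sets borel. c (A \<inter> B) = c A \<inter> c B)
     \<comment> \<open>injectivity\<close>
     \<and> inj_on c (sets borel)
     \<comment> \<open>sigma-additivity\<close>
     \<and> (\<forall>F. countable F \<and> F \<subseteq> sets borel
            \<and> (\<forall>A\<in>F. \<forall>B\<in>F. A \<noteq> B \<longrightarrow> A \<subseteq> - B)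
            \<longrightarrow> c (\<Union>F) = cjoin (c ` F))
     \<comment> \<open>E(d)-covariance\<close>
     \<and> (\<forall>g. euclidean_motion g \<longrightarrow> (\<forall>A \<in> sets borel. c (g ` A) = mink_act g (c A)))"
  unfolding c_def
  by (simp add: causally_complete_cmap cmap_empty cmap_UNIV cmap_Compl cmap_Un cmap_Int
      inj_on_subset[OF inj_cmap] cmap_Union cmap_euclidean_motion)

end
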